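(* If $\beta=\alpha$, then for $k,\ell\ge 1$: \begin{eqnarray*} |u(3k-1)-u(3k-2)| & = & |u(3k-2)-u(3k-3)|,\\ |v(3k)-v(3k-1)| & = & |v(3k-1)-v(3k-2)|,\\ |w(3k+1)-w(3k)| & = & |w(3k)-w(3k-1)|,\\ |u((3\ell-1)\omega)-u((3\ell-2)\omega)| & = & |u((3\ell-2)\omega)-u((3\ell-3)\omega)|,\\ |v(3\ell\omega)-v((3\ell-1)\omega)| & = & |v((3\ell-1)\omega)-v((3\ell-2)\omega)|,\\ |w((3\ell+1)\omega)-w(3\ell\omega)| & = & |w(3\ell\omega)-w((3\ell-1)\omega)|. \end{eqnarray*}
   Context: Here $\omega=e^{2\pi i/3}$, and $u,v,w$ are the fields on the sector $\{k+\ell\omega: k,\ell\ge0\}$ of the regular triangular lattice obtained from the $fgh$--system with the constraints \[ \alpha u=k\frac{f_0g_0f_3}{f_0g_0+g_0f_3+f_3g_3}+\ell\frac{f_2g_2f_5}{f_2g_2+g_2f_5+f_5g_5}+m\frac{f_4g_4f_1}{f_4g_4+g_4f_1+f_1g_1},\quad \beta v=k\frac{g_0f_3g_3}{f_0g_0+g_0f_3+f_3g_3}+\ell\frac{g_2f_5g_5}{f_2g_2+g_2f_5+f_5g_5}+m\frac{g_4f_1g_1}{f_4g_4+g_4f_1+f_1g_1} \] at every vertex $\mathfrak{z}=k+\ell\omega+m\omega^2$ (with $f_j,g_j$ the increments of $u,v$ along $(\mathfrak{z},\mathfrak{z}+1)$, $(\mathfrak{z}-\omega^2,\mathfrak{z})$,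 $(\mathfrak{z},\mathfrak{z}+\omega)$, $(\mathfrak{z}-1,\mathfrak{z})$, $(\mathfrak{z},\mathfrak{z}+\omega^2)$, $(\mathfrak{z}-\omega,\mathfrak{z})$ for $j=0,\dots,5$), $u(0)=v(0)=w(0)=0$, and initial conditions $u(1)=v(1)=1$, $u(\omega)=v(\omega)=e^{i\theta}$, $0<\theta<\pi$; $w$ is defined by $w(\mathfrak{z}_2)-w(\mathfrak{z}_1)=1/((u(\mathfrak{z}_2)-u(\mathfrak{z}_1))(v(\mathfrak{z}_2)-v(\mathfrak{z}_1)))$ on positively oriented edges ($\mathfrak{z}_2-\mathfrak{z}_1\in\{1,\omega,\omega^2\}$). On the positive $k$-axis the constraint reduces to $\alpha u(k)=k\frac{f(k)g(k)f(k-1)}{f(k)g(k)+g(k)f(k-1)+f(k-1)g(k-1)}$, $\beta v(k)=k\frac{g(k)f(k-1)g(k-1)}{f(k)g(k)+g(k)f(k-1)+f(k-1)g(k-1)}$ with $f(k)=u(k+1)-u(k)$, $g(k)=v(k+1)-v(k)$, and analogously on the $\ell$-axis. *)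

theory Defs
  imports "HOL-Analysis.Analysis"
begin

text \<open>Lattice points of the regular triangular lattice are encoded as pairs
  (k, l) of integers, standing for k + l*omega with omega = exp(2 pi i/3).
  Then 1 = (1,0), omega = (0,1) and omega^2 = -1-omega = (-1,-1).
  The sector is the set of (k,l) with k, l >= 0 (i.e. m = 0).\<close>

definition sector :: "(int \<times> int) set" where
  "sector = {(k, l). 0 \<le> k \<and> 0 \<le> l}"

definition pos_edge :: "int \<times> int \<Rightarrow> int \<times> int \<Rightarrow> bool" where
  "pos_edge z1 z2 \<longleftrightarrow>
     (fst z2 - fst z1, snd z2 - snd z1) \<in> {(1, 0), (0, 1), (-1, -1)}"

definition den_k :: "(int \<times> int \<Rightarrow> complex) \<Rightarrow> (int \<times> int \<Rightarrow> complex) \<Rightarrow> int \<Rightarrow> int \<Rightarrow> complex" where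
  "den_k u v k l =
     (let f0 = u (k + 1, l) - u (k, l); g0 = v (k + 1, l) - v (k, l);
          f3 = u (k, l) - u (k - 1, l); g3 = v (k, l) - v (k - 1, l)
      in f0 * g0 + g0 * f3 + f3 * g3)"

definition den_l :: "(int \<times> int \<Rightarrow> complex) \<Rightarrow> (int \<times> int \<Rightarrow> complex) \<Rightarrow> int \<Rightarrow> int \<Rightarrow> complex" where
  "den_l u v k l =
     (let f2 = u (k, l + 1) - u (k, l); g2 = v (k, l + 1) - v (k, l);
          f5 = u (k, l) - u (k, l - 1); g5 = v (k, l) - v (k, l - 1)
      in f2 * g2 + g2 * f5 + f5 * g5)"

text \<open>The constraint of the fgh-system at the vertex k + l*omega + m*omega^2
  of the sector, where m = 0 (so the m-term vanishes).\<close>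
definition fgh_constraint ::
  "real \<Rightarrow> real \<Rightarrow> (int \<times> int \<Rightarrow> complex) \<Rightarrow> (int \<times> int \<Rightarrow> complex) \<Rightarrow> int \<Rightarrow> int \<Rightarrow> bool" where
  "fgh_constraint \<alpha> \<beta> u v k l \<longleftrightarrow>
     (let f0 = u (k + 1, l) - u (k, l); g0 = v (k + 1, l) - v (k, l);
          f3 = u (k, l) - u (k - 1, l); g3 = v (k, l) - v (k - 1, l);
          f2 = u (k, l + 1) - u (k, l); g2 = v (k, l + 1) - v (k, l);
          f5 = u (k, l) - u (k, l - 1); g5 = v (k, l) - v (k, l - 1)
      in complex_of_real \<alpha> * u (k, l) =
           of_int k * (f0 * g0 * f3 / (f0 * g0 + g0 * f3 + f3 * g3))
         + of_int l * (f2 * g2 * f5 / (f2 * g2 + g2 * f5 + f5 * g5))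
       \<and> complex_of_real \<beta> * v (k, l) =
           of_int k * (g0 * f3 * g3 / (f0 * g0 + g0 * f3 + f3 * g3))
         + of_int l * (g2 * f5 * g5 / (f2 * g2 + g2 * f5 + f5 * g5)))"

end

(* On an axis write U, V for u, v and y_k = U_k / (U_(k+1) - U_k), z_k = V_k / (V_(k+1) - V_k).
   For beta = alpha the quotient of the two constraint equations at vertex k+1 gives
   y_(k+1) = z_k + 1, and the u-equation divided by alpha f_0 g_0 f_3 reads
   U_(k+1)/f_3 + y_(k+1) + z_(k+1) = (k+1)/alpha, i.e. z_(k+1) = (k+1)/alpha - y_k - z_k - 2.
   With y_0 = z_0 = 0 this recurrence is periodic modulo 3 up to the drift k/(3 alpha), and at
   the residues where y or z increases by exactly 1 the corresponding step of U or V does not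
   change.  The steps of w are 1/(U' V'), so they repeat where both U' and V' do.  The l-axis
   is the k-axis of the fields composed with prod.swap, under which the constraint is
   symmetric. *)

theory Submission
  imports Defs
begin

definition fwd_diff :: "(nat \<Rightarrow> 'a::ab_group_add) \<Rightarrow> nat \<Rightarrow> 'a" where
  "fwd_diff U k = U (Suc k) - U k"

definition ratio_fwd :: "(nat \<Rightarrow> 'a::field) \<Rightarrow> nat \<Rightarrow> 'a" where
  "ratio_fwd U k = U k / fwd_diff U k"

lemma Suc_div_fwd_diff:
  fixes U :: "nat \<Rightarrow> 'a::field"
  assumes "fwd_diff U k \<noteq> 0"
  shows "U (Suc k) / fwd_diff U k = ratio_fwd U k + 1"
  using assms by (simp add: ratio_fwd_def fwd_diff_def field_simps)

lemma ratio_fwd_0: "U 0 = 0 \<Longrightarrow> ratio_fwd U 0 = 0"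
  by (simp add: ratio_fwd_def)

lemma fwd_diff_Suc_eqI:
  fixes U :: "nat \<Rightarrow> 'a::field"
  assumes "fwd_diff U k \<noteq> 0" and "U (Suc k) \<noteq> 0"
    and "ratio_fwd U (Suc k) = ratio_fwd U k + 1"
  shows "fwd_diff U (Suc k) = fwd_diff U k"
proof -
  have "U (Suc k) / fwd_diff U (Suc k) = U (Suc k) / fwd_diff U k"
    using assms by (simp add: Suc_div_fwd_diff ratio_fwd_def)
  then show ?thesis
    using assms(2) by simp
qed

lemma recurrence_closed_form_mod_3:
  fixes y z :: "nat \<Rightarrow> 'a::comm_ring_1"
  assumes y_0: "y 0 = 0" and z_0: "z 0 = 0"
    and y_Suc: "\<And>j. y (Suc j) = z j + 1"
    and z_Suc: "\<And>j. z (Suc j) = of_nat (Suc j) * c - y j - z j - 2"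
  shows "y (3*m) = of_nat m * c" "z (3*m) = of_nat m * c"
    and "y (3*m + 1) = of_nat m * c + 1" "z (3*m + 1) = of_nat (m + 1) * c - 2"
    and "y (3*m + 2) = of_nat (m + 1) * c - 1" "z (3*m + 2) = of_nat (m + 1) * c - 1"
proof -
  have step: "y (3*m + 3) = of_nat (m + 1) * c \<and> z (3*m + 3) = of_nat (m + 1) * c"
    if "y (3*m) = of_nat m * c" "z (3*m) = of_nat m * c" for m
    using that by (simp add: numeral_eq_Suc y_Suc z_Suc algebra_simps)
  have multiple: "y (3*m) = of_nat m * c \<and> z (3*m) = of_nat m * c" for m
  proof (induction m)
    case 0
    then show ?case by (simp add: y_0 z_0)
  next
    case (Suc m)
    then show ?case using step[of m] by (simp add: add.commute)
  qed
  then show "y (3*m) = of_nat m * c" "z (3*m) = of_nat m * c"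
    by simp_all
  then show "y (3*m + 1) = of_nat m * c + 1" "z (3*m + 1) = of_nat (m + 1) * c - 2"
      and "y (3*m + 2) = of_nat (m + 1) * c - 1" "z (3*m + 2) = of_nat (m + 1) * c - 1"
    by (simp_all add: numeral_eq_Suc y_Suc z_Suc algebra_simps)
qed

text \<open>The denominator of the constraint at the axis vertex \<open>Suc k\<close>, where
  \<open>f\<^sub>0 = fwd_diff U (Suc k)\<close> and \<open>f\<^sub>3 = fwd_diff U k\<close>.\<close>

definition axis_den :: "(nat \<Rightarrow> 'a::comm_ring) \<Rightarrow> (nat \<Rightarrow> 'a) \<Rightarrow> nat \<Rightarrow> 'a" where
  "axis_den U V k =
     fwd_diff U (Suc k) * fwd_diff V (Suc k) + fwd_diff V (Suc k) * fwd_diff U k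
   + fwd_diff U k * fwd_diff V k"

locale fgh_axis =
  fixes a :: "'a::field_char_0" and U V :: "nat \<Rightarrow> 'a"
  assumes U_0: "U 0 = 0" and V_0: "V 0 = 0"
    and fwd_diff_U_nz: "fwd_diff U k \<noteq> 0" and fwd_diff_V_nz: "fwd_diff V k \<noteq> 0"
    and axis_den_nz: "axis_den U V k \<noteq> 0"
    and U_constraint: "a * U (Suc k) = of_nat (Suc k) *
          (fwd_diff U (Suc k) * fwd_diff V (Suc k) * fwd_diff U k / axis_den U V k)"
    and V_constraint: "a * V (Suc k) = of_nat (Suc k) *
          (fwd_diff V (Suc k) * fwd_diff U k * fwd_diff V k / axis_den U V k)"
begin

lemma U_constraint_cleared:
  "a * U (Suc k) * axis_den U V k =
     of_nat (Suc k) * (fwd_diff U (Suc k) * fwd_diff V (Suc k) * fwd_diff U k)"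
  using U_constraint[of k] axis_den_nz[of k] by (simp add: field_simps)

lemma V_constraint_cleared:
  "a * V (Suc k) * axis_den U V k =
     of_nat (Suc k) * (fwd_diff V (Suc k) * fwd_diff U k * fwd_diff V k)"
  using V_constraint[of k] axis_den_nz[of k] by (simp add: field_simps)

lemma a_nz: "a \<noteq> 0"
  and U_Suc_nz: "U (Suc k) \<noteq> 0"
  and V_Suc_nz: "V (Suc k) \<noteq> 0"
  using U_constraint_cleared[of k] V_constraint_cleared[of k]
    fwd_diff_U_nz fwd_diff_V_nz by (auto simp del: of_nat_Suc)

lemma U_V_cross_ratio: "U (Suc k) * fwd_diff V k = V (Suc k) * fwd_diff U (Suc k)"
proof -
  have "a * axis_den U V k * (U (Suc k) * fwd_diff V k) =
        (a * U (Suc k) * axis_den U V k) * fwd_diff V k"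
    by (simp only: ac_simps)
  also have "\<dots> = (a * V (Suc k) * axis_den U V k) * fwd_diff U (Suc k)"
    by (simp only: U_constraint_cleared V_constraint_cleared) (simp only: ac_simps)
  also have "\<dots> = a * axis_den U V k * (V (Suc k) * fwd_diff U (Suc k))"
    by (simp only: ac_simps)
  finally show ?thesis
    using a_nz axis_den_nz by simp
qed

lemma ratio_fwd_U_Suc: "ratio_fwd U (Suc k) = ratio_fwd V k + 1"
proof -
  have "ratio_fwd U (Suc k) = V (Suc k) / fwd_diff V k"
    using U_V_cross_ratio fwd_diff_U_nz fwd_diff_V_nz
    by (simp add: ratio_fwd_def field_simps)
  then show ?thesis
    by (simp add: Suc_div_fwd_diff[OF fwd_diff_V_nz])
qed

lemma ratio_sum:
  "U (Suc k) / fwd_diff U k + ratio_fwd U (Suc k) + ratio_fwd V (Suc k) = of_nat (Suc k) / a"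
proof -
  let ?P = "fwd_diff U (Suc k) * fwd_diff V (Suc k) * fwd_diff U k"
  have "(U (Suc k) / fwd_diff U k + ratio_fwd U (Suc k) + ratio_fwd V (Suc k)) * ?P
        = U (Suc k) * axis_den U V k"
    using U_V_cross_ratio fwd_diff_U_nz fwd_diff_V_nz
    by (simp add: ratio_fwd_def axis_den_def field_simps)
  also have "\<dots> = of_nat (Suc k) / a * ?P"
    using U_constraint_cleared a_nz by (simp add: field_simps)
  moreover have "?P \<noteq> 0"
    using fwd_diff_U_nz fwd_diff_V_nz by simp
  ultimately show ?thesis
    by (metis mult_right_cancel)
qed

lemma ratio_fwd_V_Suc:
  "ratio_fwd V (Suc k) = of_nat (Suc k) * (1 / a) - ratio_fwd U k - ratio_fwd V k - 2"
  using ratio_sum[of k] a_nz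
  by (simp add: Suc_div_fwd_diff[OF fwd_diff_U_nz] ratio_fwd_U_Suc field_simps)

lemma ratio_fwd_closed_form:
  "ratio_fwd U (3*m) = of_nat m * (1 / a)" "ratio_fwd V (3*m) = of_nat m * (1 / a)"
  "ratio_fwd U (3*m + 1) = of_nat m * (1 / a) + 1"
  "ratio_fwd V (3*m + 1) = of_nat (m + 1) * (1 / a) - 2"
  "ratio_fwd U (3*m + 2) = of_nat (m + 1) * (1 / a) - 1"
  "ratio_fwd V (3*m + 2) = of_nat (m + 1) * (1 / a) - 1"
  by (fact recurrence_closed_form_mod_3[OF ratio_fwd_0[of U, OF U_0] ratio_fwd_0[of V, OF V_0]
        ratio_fwd_U_Suc ratio_fwd_V_Suc])+

theorem fwd_diff_period_3:
  "fwd_diff U (3*m + 1) = fwd_diff U (3*m)"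
  "fwd_diff V (3*m + 2) = fwd_diff V (3*m + 1)"
  "fwd_diff U (3*m + 3) = fwd_diff U (3*m + 2)"
  "fwd_diff V (3*m + 3) = fwd_diff V (3*m + 2)"
proof -
  have U_step: "fwd_diff U (Suc k) = fwd_diff U k"
    if "ratio_fwd U (Suc k) = ratio_fwd U k + 1" for k
    using fwd_diff_Suc_eqI[OF fwd_diff_U_nz U_Suc_nz that] .
  have V_step: "fwd_diff V (Suc k) = fwd_diff V k"
    if "ratio_fwd V (Suc k) = ratio_fwd V k + 1" for k
    using fwd_diff_Suc_eqI[OF fwd_diff_V_nz V_Suc_nz that] .
  have idx: "Suc (3*m) = 3*m + 1" "Suc (3*m + 1) = 3*m + 2" "Suc (3*m + 2) = 3*m + 3"
      "3*(m + 1) = 3*m + 3"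
    by simp_all
  note closed_form = ratio_fwd_closed_form ratio_fwd_closed_form(1,2)[of "m + 1", unfolded idx]
  show "fwd_diff U (3*m + 1) = fwd_diff U (3*m)"
    by (rule U_step[of "3*m", unfolded idx]) (simp only: closed_form)
  show "fwd_diff V (3*m + 2) = fwd_diff V (3*m + 1)"
    by (rule V_step[of "3*m + 1", unfolded idx]) (simp only: closed_form, simp)
  show "fwd_diff U (3*m + 3) = fwd_diff U (3*m + 2)"
    by (rule U_step[of "3*m + 2", unfolded idx]) (simp only: closed_form, simp)
  show "fwd_diff V (3*m + 3) = fwd_diff V (3*m + 2)"
    by (rule V_step[of "3*m + 2", unfolded idx]) (simp only: closed_form, simp)
qed

end

lemma fgh_constraint_swap:
  "fgh_constraint \<alpha> \<beta> (u \<circ> prod.swap) (v \<circ> prod.swap) k l = fgh_constraint \<alpha> \<beta> u v l k"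
  by (simp add: fgh_constraint_def Let_def add.commute)

lemma den_k_swap: "den_k (u \<circ> prod.swap) (v \<circ> prod.swap) k l = den_l u v l k"
  by (simp add: den_k_def den_l_def)

lemma fgh_axis_on_k_axis:
  fixes \<alpha> :: real and u v :: "int \<times> int \<Rightarrow> complex"
  assumes origin: "u (0, 0) = 0" "v (0, 0) = 0"
    and edges_nz: "\<And>k. 0 \<le> k \<Longrightarrow> u (k + 1, 0) \<noteq> u (k, 0) \<and> v (k + 1, 0) \<noteq> v (k, 0)"
    and den_nz: "\<And>k. 0 < k \<Longrightarrow> den_k u v k 0 \<noteq> 0"
    and constraint: "\<And>k. 0 < k \<Longrightarrow> fgh_constraint \<alpha> \<alpha> u v k 0"
  shows "fgh_axis (complex_of_real \<alpha>) (\<lambda>n. u (int n, 0)) (\<lambda>n. v (int n, 0))"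
proof -
  define U where "U n = u (int n, 0)" for n
  define V where "V n = v (int n, 0)" for n
  have "fgh_axis (complex_of_real \<alpha>) U V"
  proof
    fix k :: nat
    have idx: "int (Suc k) + 1 = int (Suc (Suc k))" "int (Suc k) - 1 = int k" by simp_all
    show "U 0 = 0" "V 0 = 0"
      using origin by (simp_all add: U_def V_def)
    show "fwd_diff U k \<noteq> 0" "fwd_diff V k \<noteq> 0"
      using edges_nz[of "int k"] by (simp_all add: U_def V_def fwd_diff_def add.commute)
    show "axis_den U V k \<noteq> 0"
      using den_nz[of "int (Suc k)"]
      by (simp only: den_k_def Let_def idx) (simp add: U_def V_def axis_den_def fwd_diff_def)
    have "fgh_constraint \<alpha> \<alpha> u v (int (Suc k)) 0"
      using constraint by simp
    then show
      "complex_of_real \<alpha> * U (Suc k) = of_nat (Suc k) *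
         (fwd_diff U (Suc k) * fwd_diff V (Suc k) * fwd_diff U k / axis_den U V k)"
      "complex_of_real \<alpha> * V (Suc k) = of_nat (Suc k) *
         (fwd_diff V (Suc k) * fwd_diff U k * fwd_diff V k / axis_den U V k)"
      by (simp_all only: fgh_constraint_def Let_def idx of_int_of_nat_eq of_int_0
          mult_zero_left add_0_right)
        (simp_all add: U_def V_def axis_den_def fwd_diff_def)
  qed
  then show ?thesis
    by (simp add: U_def [abs_def] V_def [abs_def])
qed

lemma k_axis_steps_period_3:
  fixes \<alpha> :: real and u v w :: "int \<times> int \<Rightarrow> complex"
  assumes origin: "u (0, 0) = 0" "v (0, 0) = 0"
    and edges_nz: "\<And>k. 0 \<le> k \<Longrightarrow> u (k + 1, 0) \<noteq> u (k, 0) \<and> v (k + 1, 0) \<noteq> v (k, 0)"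
    and den_nz: "\<And>k. 0 < k \<Longrightarrow> den_k u v k 0 \<noteq> 0"
    and constraint: "\<And>k. 0 < k \<Longrightarrow> fgh_constraint \<alpha> \<alpha> u v k 0"
    and w_step: "\<And>k. 0 \<le> k \<Longrightarrow>
          w (k + 1, 0) - w (k, 0) = 1 / ((u (k + 1, 0) - u (k, 0)) * (v (k + 1, 0) - v (k, 0)))"
  shows "\<forall>k::int. k \<ge> 1 \<longrightarrow>
           cmod (u (3*k - 1, 0) - u (3*k - 2, 0)) = cmod (u (3*k - 2, 0) - u (3*k - 3, 0))
         \<and> cmod (v (3*k, 0) - v (3*k - 1, 0)) = cmod (v (3*k - 1, 0) - v (3*k - 2, 0))
         \<and> cmod (w (3*k + 1, 0) - w (3*k, 0)) = cmod (w (3*k, 0) - w (3*k - 1, 0))"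
proof (intro allI impI)
  define U where "U = (\<lambda>n. u (int n, 0))"
  define V where "V = (\<lambda>n. v (int n, 0))"
  define W where "W = (\<lambda>n. w (int n, 0))"
  interpret fgh_axis "complex_of_real \<alpha>" U V
    unfolding U_def V_def using fgh_axis_on_k_axis[OF origin edges_nz den_nz constraint] .
  have W_fwd_diff: "fwd_diff W n = 1 / (fwd_diff U n * fwd_diff V n)" for n
    using w_step[of "int n"] by (simp add: U_def V_def W_def fwd_diff_def add.commute)
  fix k :: int
  assume "k \<ge> 1"
  then obtain m :: nat where "k = int m + 1"
    by (metis add.commute le_add_diff_inverse2 zero_le_imp_eq_int diff_ge_0_iff_ge)
  then have diffs:
      "u (3*k - 1, 0) - u (3*k - 2, 0) = fwd_diff U (3*m + 1)"
      "u (3*k - 2, 0) - u (3*k - 3, 0) = fwd_diff U (3*m)"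
      "v (3*k, 0) - v (3*k - 1, 0) = fwd_diff V (3*m + 2)"
      "v (3*k - 1, 0) - v (3*k - 2, 0) = fwd_diff V (3*m + 1)"
      "w (3*k + 1, 0) - w (3*k, 0) = fwd_diff W (3*m + 3)"
      "w (3*k, 0) - w (3*k - 1, 0) = fwd_diff W (3*m + 2)"
    by (simp_all add: U_def V_def W_def fwd_diff_def algebra_simps)
  show "cmod (u (3*k - 1, 0) - u (3*k - 2, 0)) = cmod (u (3*k - 2, 0) - u (3*k - 3, 0))
      \<and> cmod (v (3*k, 0) - v (3*k - 1, 0)) = cmod (v (3*k - 1, 0) - v (3*k - 2, 0))
      \<and> cmod (w (3*k + 1, 0) - w (3*k, 0)) = cmod (w (3*k, 0) - w (3*k - 1, 0))"
    by (simp only: diffs W_fwd_diff fwd_diff_period_3 simp_thms)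
qed

theorem lemma21:
  fixes \<alpha> \<beta> \<theta> :: real and u v w :: "int \<times> int \<Rightarrow> complex"
  assumes beta_eq: "\<beta> = \<alpha>"
    and theta: "0 < \<theta>" "\<theta> < pi"
    and origin: "u (0, 0) = 0" "v (0, 0) = 0" "w (0, 0) = 0"
    and init1: "u (1, 0) = 1" "v (1, 0) = 1"
    and init\<omega>: "u (0, 1) = cis \<theta>" "v (0, 1) = cis \<theta>"
    and constraint: "\<And>k l. 0 \<le> k \<Longrightarrow> 0 \<le> l \<Longrightarrow> fgh_constraint \<alpha> \<beta> u v k l"
    and den_k_nz: "\<And>k l. 0 < k \<Longrightarrow> 0 \<le> l \<Longrightarrow> den_k u v k l \<noteq> 0"
    and den_l_nz: "\<And>k l. 0 \<le> k \<Longrightarrow> 0 < l \<Longrightarrow> den_l u v k l \<noteq> 0"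
    and edges_nz: "\<And>z1 z2. z1 \<in> sector \<Longrightarrow> z2 \<in> sector \<Longrightarrow> pos_edge z1 z2 \<Longrightarrow>
                     u z2 \<noteq> u z1 \<and> v z2 \<noteq> v z1"
    and w_def: "\<And>z1 z2. z1 \<in> sector \<Longrightarrow> z2 \<in> sector \<Longrightarrow> pos_edge z1 z2 \<Longrightarrow>
                  w z2 - w z1 = 1 / ((u z2 - u z1) * (v z2 - v z1))"
  shows "(\<forall>k::int. k \<ge> 1 \<longrightarrow>
           cmod (u (3*k - 1, 0) - u (3*k - 2, 0)) = cmod (u (3*k - 2, 0) - u (3*k - 3, 0))
         \<and> cmod (v (3*k, 0) - v (3*k - 1, 0)) = cmod (v (3*k - 1, 0) - v (3*k - 2, 0))
         \<and> cmod (w (3*k + 1, 0) - w (3*k, 0)) = cmod (w (3*k, 0) - w (3*k - 1, 0)))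
       \<and> (\<forall>l::int. l \<ge> 1 \<longrightarrow>
           cmod (u (0, 3*l - 1) - u (0, 3*l - 2)) = cmod (u (0, 3*l - 2) - u (0, 3*l - 3))
         \<and> cmod (v (0, 3*l) - v (0, 3*l - 1)) = cmod (v (0, 3*l - 1) - v (0, 3*l - 2))
         \<and> cmod (w (0, 3*l + 1) - w (0, 3*l)) = cmod (w (0, 3*l) - w (0, 3*l - 1)))"
proof -
  have edges_k: "u (k + 1, 0) \<noteq> u (k, 0) \<and> v (k + 1, 0) \<noteq> v (k, 0)" if "0 \<le> k" for k
    using edges_nz[of "(k, 0)" "(k + 1, 0)"] that by (simp add: sector_def pos_edge_def)
  have edges_l: "u (0, k + 1) \<noteq> u (0, k) \<and> v (0, k + 1) \<noteq> v (0, k)" if "0 \<le> k" for k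
    using edges_nz[of "(0, k)" "(0, k + 1)"] that by (simp add: sector_def pos_edge_def)
  have w_k: "w (k + 1, 0) - w (k, 0) = 1 / ((u (k + 1, 0) - u (k, 0)) * (v (k + 1, 0) - v (k, 0)))"
    if "0 \<le> k" for k
    using w_def[of "(k, 0)" "(k + 1, 0)"] that by (simp add: sector_def pos_edge_def)
  have w_l: "w (0, k + 1) - w (0, k) = 1 / ((u (0, k + 1) - u (0, k)) * (v (0, k + 1) - v (0, k)))"
    if "0 \<le> k" for k
    using w_def[of "(0, k)" "(0, k + 1)"] that by (simp add: sector_def pos_edge_def)
  from k_axis_steps_period_3[of u v \<alpha> w]
    k_axis_steps_period_3[of "u \<circ> prod.swap" "v \<circ> prod.swap" \<alpha> "w \<circ> prod.swap"]
  show ?thesis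
    using origin edges_k edges_l w_k w_l constraint den_k_nz den_l_nz
    by (simp add: beta_eq fgh_constraint_swap den_k_swap)
qed

end
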